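(* Let $0<\alpha<1/2$. Then, as $N\to\infty$ through positive integers, \[ \frac{1}{N}\sum_{m,n=1}^{N}\frac{(m,n)^{2\alpha}}{(mn)^{\alpha}} = \frac{\zeta(2-2\alpha)}{\zeta(2)(1-\alpha)^2}\,N^{1-2\alpha}+O(1), \] where the implied constant depends only on $\alpha$.
   Context: $(m,n)$ denotes the greatest common divisor of $m$ and $n$, and $\zeta$ is the Riemann zeta function. *)

theory Defs
  imports "HOL-Analysis.Analysis"
begin

text \<open>Riemann zeta function on real arguments s > 1, given by its defining Dirichlet series.
  (Only values at 2 and 2 - 2 alpha, both > 1, are needed.)\<close>
definition zeta_real :: "real \<Rightarrow> real" where
  "zeta_real s = (\<Sum>n. 1 / real (Suc n) powr s)"

end

(*
  Let J_a(d) = d^a \<Prod>_{p | d} (1 - p^-a) be Jordan's totient function for real a, so that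
  \<Sum>_{d | n} J_a(d) = n^a. Expanding gcd(m,n)^(2\<alpha>) = \<Sum>_{d | m, d | n} J_2\<alpha>(d) and summing over
  m and n first turns the gcd sum into \<Sum>_{d \<le> N} J_2\<alpha>(d) d^-2\<alpha> A(N/d)^2, where
  A(x) = \<Sum>_{k \<le> x} k^-\<alpha> = x^(1-\<alpha>)/(1-\<alpha>) + O(1). As J_2\<alpha>(d) d^-2\<alpha> \<le> 1, replacing A by its
  main term costs O(\<Sum>_{d \<le> N} (N/d)^(1-\<alpha>)) = O(N) and leaves N^(2-2\<alpha>)/(1-\<alpha>)^2 \<Sum>_{d \<le> N} J_2\<alpha>(d)/d^2.
  Dividing the divisor-sum identity by n^2 and summing over n gives \<Sum>_d J_a(d)/d^2 = \<zeta>(2-a)/\<zeta>(2);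
  for 2\<alpha> < 1 the tail of this series beyond N is O(N^(2\<alpha>-1)), which again contributes O(N).
*)

theory Submission
  imports Defs "HOL-Computational_Algebra.Primes"
begin

section \<open>Jordan's totient function for real exponents\<close>

lemma sum_divisors_mult_coprime:
  fixes f :: "nat \<Rightarrow> 'a :: comm_monoid_add"
  assumes "coprime a b"
  shows "(\<Sum>d | d dvd a * b. f d) = (\<Sum>x | x dvd a. \<Sum>y | y dvd b. f (x * y))"
proof -
  have gcd_factors: "gcd (x * y) a = x \<and> gcd (x * y) b = y" if "x dvd a" "y dvd b" for x y
  proof -
    have "coprime a y" "coprime x b"
      using coprime_divisors[OF dvd_refl that(2) assms] coprime_divisors[OF that(1) dvd_refl assms] .
    then show ?thesis
      using that by (simp add: gcd_mult_left_right_cancel gcd_mult_left_left_cancel coprime_commute gcd_nat.absorb1)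
  qed
  have "bij_betw (\<lambda>(x, y). x * y) ({x. x dvd a} \<times> {y. y dvd b}) {d. d dvd a * b}"
  proof (rule bij_betwI[where g = "\<lambda>d. (gcd d a, gcd d b)"])
    show "(\<lambda>d. (gcd d a, gcd d b)) ((\<lambda>(x, y). x * y) u) = u"
      if "u \<in> {x. x dvd a} \<times> {y. y dvd b}" for u
      using that gcd_factors by auto
    show "(\<lambda>(x, y). x * y) (gcd d a, gcd d b) = d" if "d \<in> {d. d dvd a * b}" for d
      using that gcd_factors division_decomp by (metis (no_types, lifting) case_prod_conv mem_Collect_eq)
    show "(\<lambda>(x, y). x * y) \<in> {x. x dvd a} \<times> {y. y dvd b} \<rightarrow> {d. d dvd a * b}"
      by (auto intro: mult_dvd_mono)
    show "(\<lambda>d. (gcd d a, gcd d b)) \<in> {d. d dvd a * b} \<rightarrow> {x. x dvd a} \<times> {y. y dvd b}"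
      by auto
  qed
  then show ?thesis
    by (simp add: sum.reindex_bij_betw[symmetric] sum.cartesian_product split_def)
qed

definition jordan_totient :: "real \<Rightarrow> nat \<Rightarrow> real" where
  "jordan_totient a d = real d powr a * (\<Prod>p\<in>prime_factors d. 1 - real p powr (-a))"

lemma prime_factor_powr_neg_le_one:
  assumes "p \<in> prime_factors d" "0 \<le> a"
  shows "real p powr (-a) \<le> 1"
proof -
  have "1 \<le> real p"
    using assms(1) prime_gt_0_nat by (auto simp: in_prime_factors_iff Suc_le_eq)
  then show ?thesis
    using assms(2) by (simp add: powr_minus_divide ge_one_powr_ge_zero)
qed

lemma jordan_totient_nonneg: "0 \<le> a \<Longrightarrow> 0 \<le> jordan_totient a d"
  unfolding jordan_totient_def
  by (intro mult_nonneg_nonneg prod_nonneg ballI) (simp_all add: prime_factor_powr_neg_le_one)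

lemma jordan_totient_le_powr: "0 \<le> a \<Longrightarrow> jordan_totient a d \<le> real d powr a"
  unfolding jordan_totient_def
  by (intro mult_left_le prod_le_1) (simp_all add: prime_factor_powr_neg_le_one)

lemma jordan_totient_mult_coprime:
  assumes "coprime x y"
  shows "jordan_totient a (x * y) = jordan_totient a x * jordan_totient a y"
proof (cases "x = 0 \<or> y = 0")
  case True
  with assms show ?thesis by (auto simp: jordan_totient_def)
next
  case False
  have "prime_factors x \<inter> prime_factors y = {}"
    using assms by (auto simp: in_prime_factors_iff dest: coprime_common_divisor_nat)
  moreover have "prime_factors (x * y) = prime_factors x \<union> prime_factors y"
    using False by (simp add: prime_factors_product)
  ultimately show ?thesis
    by (simp add: jordan_totient_def prod.union_disjoint powr_mult)
qed

lemma jordan_totient_prime_power_Suc: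
  assumes "prime p"
  shows "jordan_totient a (p ^ Suc k) = real p powr (a * Suc k) * (1 - real p powr (-a))"
proof -
  have "prime_factors (p ^ Suc k) = {p}"
    by (simp add: prime_factorization_prime_power[OF assms] del: power_Suc)
  moreover have "real (p ^ Suc k) = real p powr real (Suc k)"
    using prime_gt_0_nat[OF assms] by (subst powr_realpow) auto
  ultimately show ?thesis
    by (simp add: jordan_totient_def powr_powr mult.commute)
qed

lemma sum_divisors_prime_power_jordan_totient:
  assumes "prime p"
  shows "(\<Sum>d | d dvd p ^ k. jordan_totient a d) = real (p ^ k) powr a"
proof -
  have p: "1 < p" using assms prime_gt_1_nat by blast
  have "(\<Sum>i\<le>k. jordan_totient a (p ^ i)) = real p powr (a * k)"
  proof (induction k)
    case 0
    show ?case using p by (simp add: jordan_totient_def)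
  next
    case (Suc k)
    then show ?case
      using jordan_totient_prime_power_Suc[OF assms, of a k] p
      by (simp add: algebra_simps powr_add[symmetric])
  qed
  moreover have "{d. d dvd p ^ k} = (\<lambda>i. p ^ i) ` {..k}"
    using divides_primepow_nat[OF assms] by auto
  moreover have "inj_on (\<lambda>i. p ^ i) {..k}"
    using p by (auto simp: inj_on_def power_inject_exp)
  ultimately show ?thesis
    using p by (simp add: sum.reindex powr_realpow[symmetric] powr_powr mult.commute)
qed

lemma split_off_prime_power:
  fixes n :: nat
  assumes "1 < n"
  obtains p k m where "prime p" "n = p ^ k * m" "coprime (p ^ k) m" "m < n"
proof -
  obtain p where p: "prime p" "p dvd n"
    using prime_factor_nat[of n] assms by auto
  define k where "k = multiplicity p n"
  have "n \<noteq> 0" "\<not> is_unit p"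
    using assms p(1) by auto
  then obtain m where m: "n = p ^ k * m" "\<not> p dvd m"
    unfolding k_def by (rule multiplicity_decompose')
  have "k \<noteq> 0"
    using m p(2) by (cases "k = 0") auto
  then have "1 < p ^ k"
    using one_less_power[OF prime_gt_1_nat[OF p(1)]] by simp
  moreover have "0 < m"
    using m(1) assms by (auto intro: gr0I)
  ultimately have "m < n"
    using m(1) by simp
  moreover have "coprime (p ^ k) m"
    using prime_imp_coprime[OF p(1) m(2)] by simp
  ultimately show ?thesis
    using that p(1) m(1) by blast
qed

lemma sum_divisors_jordan_totient:
  "0 < n \<Longrightarrow> (\<Sum>d | d dvd n. jordan_totient a d) = real n powr a"
proof (induction n rule: less_induct)
  case (less n)
  show ?case
  proof (cases "n = 1")
    case True
    then show ?thesis by (simp add: jordan_totient_def)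
  next
    case False
    with less.prems have "1 < n" by simp
    then obtain p k m where
      pkm: "prime p" "n = p ^ k * m" "coprime (p ^ k) m" "m < n"
      by (rule split_off_prime_power)
    then have "0 < m" using less.prems by (auto intro: gr0I)
    have "(\<Sum>d | d dvd n. jordan_totient a d)
        = (\<Sum>x | x dvd p ^ k. \<Sum>y | y dvd m. jordan_totient a x * jordan_totient a y)"
      unfolding pkm(2) sum_divisors_mult_coprime[OF pkm(3)]
      using pkm(3) by (intro sum.cong refl jordan_totient_mult_coprime)
        (simp add: coprime_divisors)
    also have "\<dots> = real (p ^ k) powr a * real m powr a"
      by (simp add: sum_product[symmetric] sum_divisors_prime_power_jordan_totient[OF pkm(1)]
          less.IH[OF pkm(4) \<open>0 < m\<close>])
    also have "\<dots> = real n powr a"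
      by (simp add: pkm(2) powr_mult)
    finally show ?thesis .
  qed
qed

lemma powr_gcd_eq_sum_jordan_totient:
  assumes "m \<in> {1..N}" "n \<in> {1..N}"
  shows "real (gcd m n) powr a = (\<Sum>d\<in>{1..N}. if d dvd m \<and> d dvd n then jordan_totient a d else 0)"
proof -
  have "{d \<in> {1..N}. d dvd m \<and> d dvd n} = {d. d dvd gcd m n}"
    using assms by (auto dest: dvd_imp_le intro: gr0I)
  then show ?thesis
    using assms sum_divisors_jordan_totient[of "gcd m n" a] by (simp add: sum.inter_filter[symmetric])
qed

lemma sum_multiples_powr:
  assumes "1 \<le> d"
  shows "(\<Sum>m\<in>{1..N}. if d dvd m then real m powr b else 0)
       = real d powr b * (\<Sum>k\<in>{1..N div d}. real k powr b)"
proof -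
  have "{m \<in> {1..N}. d dvd m} = (\<lambda>k. d * k) ` {1..N div d}"
    using assms by (auto simp: less_eq_div_iff_mult_less_eq mult.commute intro: gr0I elim!: dvdE)
  moreover have "inj_on (\<lambda>k. d * k) {1..N div d}"
    using assms by (auto simp: inj_on_def)
  ultimately show ?thesis
    by (simp add: sum.inter_filter[symmetric] sum.reindex powr_mult sum_distrib_left)
qed

lemma sum_gcd_powr_div_powr:
  "(\<Sum>m\<in>{1..N}. \<Sum>n\<in>{1..N}. real (gcd m n) powr a / real (m * n) powr b)
   = (\<Sum>d\<in>{1..N}. jordan_totient a d * (real d powr (-b) * (\<Sum>k\<in>{1..N div d}. real k powr (-b)))\<^sup>2)"
proof -
  define u where "u d m = (if d dvd m then real m powr (-b) else 0)" for d m :: nat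
  have "real (gcd m n) powr a / real (m * n) powr b
      = (\<Sum>d\<in>{1..N}. jordan_totient a d * u d m * u d n)"
    if "m \<in> {1..N}" "n \<in> {1..N}" for m n
  proof -
    have "real (gcd m n) powr a / real (m * n) powr b
        = (\<Sum>d\<in>{1..N}. if d dvd m \<and> d dvd n then jordan_totient a d else 0)
          * (real m powr (-b) * real n powr (-b))"
      using that by (simp add: powr_gcd_eq_sum_jordan_totient[OF that] powr_mult powr_minus divide_inverse)
    also have "\<dots> = (\<Sum>d\<in>{1..N}. jordan_totient a d * u d m * u d n)"
      unfolding sum_distrib_right by (intro sum.cong) (auto simp: u_def)
    finally show ?thesis .
  qed
  then have "(\<Sum>m\<in>{1..N}. \<Sum>n\<in>{1..N}. real (gcd m n) powr a / real (m * n) powr b)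
      = (\<Sum>m\<in>{1..N}. \<Sum>n\<in>{1..N}. \<Sum>d\<in>{1..N}. jordan_totient a d * u d m * u d n)"
    by simp
  also have "\<dots> = (\<Sum>d\<in>{1..N}. \<Sum>m\<in>{1..N}. \<Sum>n\<in>{1..N}. jordan_totient a d * u d m * u d n)"
    by (subst sum.swap, subst (2) sum.swap) (rule refl)
  also have "\<dots> = (\<Sum>d\<in>{1..N}. jordan_totient a d * ((\<Sum>m\<in>{1..N}. u d m) * (\<Sum>n\<in>{1..N}. u d n)))"
    unfolding sum_product by (simp add: sum_distrib_left mult.assoc)
  also have "\<dots> = (\<Sum>d\<in>{1..N}. jordan_totient a d * (real d powr (-b) * (\<Sum>k\<in>{1..N div d}. real k powr (-b)))\<^sup>2)"
    using sum_multiples_powr[where N = N and b = "-b"] by (intro sum.cong refl) (simp add: u_def power2_eq_square)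
  finally show ?thesis .
qed

section \<open>Sums of real powers\<close>

lemma powr_mean_value:
  fixes a b e :: real
  assumes "0 < a" "a < b"
  obtains z where "a < z" "z < b" "b powr e - a powr e = e * (b - a) * z powr (e - 1)"
proof -
  have "\<And>x. a \<le> x \<Longrightarrow> x \<le> b \<Longrightarrow> ((\<lambda>x. x powr e) has_real_derivative e * x powr (e - 1)) (at x)"
    using assms by (intro has_real_derivative_powr) auto
  from MVT2[OF assms(2) this] show ?thesis
    using that by (auto simp: mult_ac)
qed

lemma powr_diff_bounds:
  fixes a b e :: real
  assumes "0 < e" "e < 1" "0 < a" "a < b"
  shows "e * (b - a) * b powr (e - 1) \<le> b powr e - a powr e"
    and "b powr e - a powr e \<le> e * (b - a) * a powr (e - 1)"
proof -
  obtain z where z: "a < z" "z < b" "b powr e - a powr e = e * (b - a) * z powr (e - 1)"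
    using powr_mean_value[OF assms(3,4)] .
  have "b powr (e - 1) \<le> z powr (e - 1)" "z powr (e - 1) \<le> a powr (e - 1)"
    using z assms powr_mono2'[of "e - 1"] by auto
  moreover have "0 \<le> e * (b - a)"
    using assms by simp
  ultimately show "e * (b - a) * b powr (e - 1) \<le> b powr e - a powr e"
    and "b powr e - a powr e \<le> e * (b - a) * a powr (e - 1)"
    unfolding z(3) by (auto intro: mult_left_mono)
qed

lemma sum_powr_le:
  assumes "0 < s" "s < 1"
  shows "(\<Sum>k\<in>{1..M}. real k powr (-s)) \<le> real M powr (1 - s) / (1 - s)"
proof (induction M)
  case (Suc M)
  have "(1 - s) * real (Suc M) powr (-s) \<le> real (Suc M) powr (1 - s) - real M powr (1 - s)"
  proof (cases "M = 0")
    case False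
    then show ?thesis
      using powr_diff_bounds(1)[of "1 - s" "real M" "real (Suc M)"] assms by simp
  qed (use assms in simp)
  then have "real (Suc M) powr (-s) \<le> (real (Suc M) powr (1 - s) - real M powr (1 - s)) / (1 - s)"
    using assms by (simp add: pos_le_divide_eq mult.commute)
  with Suc.IH show ?case
    by (simp add: diff_divide_distrib)
qed simp

lemma sum_powr_ge:
  assumes "0 < s" "s < 1"
  shows "(real (Suc M) powr (1 - s) - 1) / (1 - s) \<le> (\<Sum>k\<in>{1..M}. real k powr (-s))"
proof (induction M)
  case (Suc M)
  have "real (Suc (Suc M)) powr (1 - s) - real (Suc M) powr (1 - s) \<le> (1 - s) * real (Suc M) powr (-s)"
    using powr_diff_bounds(2)[of "1 - s" "real (Suc M)" "real (Suc (Suc M))"] assms by simp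
  then have "(real (Suc (Suc M)) powr (1 - s) - real (Suc M) powr (1 - s)) / (1 - s) \<le> real (Suc M) powr (-s)"
    using assms by (simp add: pos_divide_le_eq mult.commute)
  with Suc.IH show ?case
    by (simp add: diff_divide_distrib)
qed simp

lemma sum_powr_tail_le:
  assumes "0 < r" "1 \<le> N"
  shows "(\<Sum>n<M. real (Suc (n + N)) powr (-(1 + r))) \<le> (real N powr (-r) - real (N + M) powr (-r)) / r"
proof (induction M)
  case (Suc M)
  define a where "a = real (N + M)"
  define b where "b = a + 1"
  have "0 < a" "a < b" using assms unfolding a_def b_def by auto
  then obtain z where z: "a < z" "z < b" "b powr (-r) - a powr (-r) = -r * (b - a) * z powr (-r - 1)"
    by (rule powr_mean_value)
  have exponent: "-r - 1 = -(1 + r)"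
    by simp
  have "a powr (-r) - b powr (-r) = r * z powr (-(1 + r))"
    using z(3) unfolding b_def exponent by simp
  moreover have "b powr (-(1 + r)) \<le> z powr (-(1 + r))"
    using z \<open>0 < a\<close> assms powr_mono2'[of "-(1 + r)" z b] by simp
  ultimately have "r * b powr (-(1 + r)) \<le> a powr (-r) - b powr (-r)"
    using assms by simp
  then have "b powr (-(1 + r)) \<le> (a powr (-r) - b powr (-r)) / r"
    using assms by (simp add: pos_le_divide_eq mult.commute)
  moreover have "real (Suc (M + N)) = b" "real (N + Suc M) = b"
    unfolding a_def b_def by simp_all
  ultimately show ?case
    using Suc.IH unfolding a_def[symmetric] by (simp add: add.commute diff_divide_distrib)
qed simp

lemma square_sum_powr_estimate:
  assumes "0 < s" "s < 1" "real M \<le> x" "x < real M + 1"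
  shows "\<bar>(\<Sum>k\<in>{1..M}. real k powr (-s))\<^sup>2 - (x powr (1 - s) / (1 - s))\<^sup>2\<bar>
           \<le> 2 * x powr (1 - s) / (1 - s)\<^sup>2"
proof -
  define A where "A = (\<Sum>k\<in>{1..M}. real k powr (-s))"
  define X where "X = x powr (1 - s) / (1 - s)"
  have "0 \<le> A"
    unfolding A_def by (auto intro: sum_nonneg)
  have "A \<le> real M powr (1 - s) / (1 - s)"
    unfolding A_def using sum_powr_le assms(1,2) .
  also have "\<dots> \<le> X"
    unfolding X_def using assms by (intro divide_right_mono powr_mono2) auto
  finally have "A \<le> X" .
  have "(x powr (1 - s) - 1) / (1 - s) \<le> (real (Suc M) powr (1 - s) - 1) / (1 - s)"
    using assms by (intro divide_right_mono diff_right_mono powr_mono2) auto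
  also have "\<dots> \<le> A"
    unfolding A_def using sum_powr_ge assms(1,2) .
  finally have "X - A \<le> 1 / (1 - s)"
    unfolding X_def by (simp add: diff_divide_distrib)
  have "X\<^sup>2 - A\<^sup>2 = (X - A) * (X + A)"
    by (simp add: power2_eq_square algebra_simps)
  also have "\<dots> \<le> 1 / (1 - s) * (2 * X)"
    using \<open>X - A \<le> 1 / (1 - s)\<close> \<open>A \<le> X\<close> \<open>0 \<le> A\<close> assms by (intro mult_mono) auto
  finally show ?thesis
    using \<open>A \<le> X\<close> \<open>0 \<le> A\<close> power_mono[OF \<open>A \<le> X\<close> \<open>0 \<le> A\<close>, of 2]
    unfolding A_def[symmetric] X_def by (simp add: power2_eq_square)
qed

section \<open>The Dirichlet series of \<open>J\<^sub>a(n) / n\<^sup>2\<close>\<close>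

lemma jordan_totient_div_square_le:
  assumes "0 \<le> a" "0 < n"
  shows "jordan_totient a n / real n ^ 2 \<le> real n powr (a - 2)"
proof -
  have "jordan_totient a n / real n ^ 2 \<le> real n powr a / real n ^ 2"
    using jordan_totient_le_powr[OF assms(1)] by (intro divide_right_mono) auto
  also have "\<dots> = real n powr (a - 2)"
    using assms(2) by (simp add: powr_diff)
  finally show ?thesis .
qed

lemma summable_jordan_totient_div_square:
  assumes "0 \<le> a" "a < 1"
  shows "summable (\<lambda>n. jordan_totient a (Suc n) / real (Suc n) ^ 2)"
proof (rule summable_comparison_test')
  show "summable (\<lambda>n. real (Suc n) powr (a - 2))"
    using assms summable_real_powr_iff[of "a - 2"] summable_Suc_iff[of "\<lambda>n. real n powr (a - 2)"]
    by simp
  show "norm (jordan_totient a (Suc n) / real (Suc n) ^ 2) \<le> real (Suc n) powr (a - 2)" for n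
    using jordan_totient_div_square_le[OF assms(1), of "Suc n"] jordan_totient_nonneg[OF assms(1)]
    by (simp del: of_nat_Suc)
qed

lemma summable_zeta_real:
  assumes "1 < s"
  shows "summable (\<lambda>n. 1 / real (Suc n) powr s)"
  using assms summable_real_powr_iff[of "-s"] summable_Suc_iff[of "\<lambda>n. real n powr (-s)"]
  by (simp add: powr_minus_divide)

lemma zeta_real_pos: "1 < s \<Longrightarrow> 0 < zeta_real s"
  unfolding zeta_real_def by (rule suminf_pos[OF summable_zeta_real]) (simp_all del: of_nat_Suc)

lemma sum_powr_div_square_eq_hyperbola_sum:
  "(\<Sum>n\<in>{1..M}. real n powr a / real n ^ 2)
   = (\<Sum>(d, k)\<in>{(d, k) \<in> {1..M} \<times> {1..M}. d * k \<le> M}. jordan_totient a d / real d ^ 2 / real k ^ 2)"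
proof -
  let ?P = "{(d, k) \<in> {1..M} \<times> {1..M}. d * k \<le> M}"
  let ?S = "Sigma {1..M} (\<lambda>n. {d. d dvd n})"
  have "bij_betw (\<lambda>(d, k). (d * k, d)) ?P ?S"
  proof (rule bij_betwI[where g = "\<lambda>(n, d). (d, n div d)"])
    show "(\<lambda>(n, d). (d, n div d)) \<in> ?S \<rightarrow> ?P"
    proof
      fix x assume "x \<in> ?S"
      then obtain n d k where "x = (n, d)" "n = d * k" "1 \<le> n" "n \<le> M"
        by (auto elim!: dvdE)
      moreover have "0 < d" "0 < k"
        using calculation by (auto intro: gr0I)
      moreover have "d \<le> M" "k \<le> M"
        using calculation le_trans[of d n M] le_trans[of k n M] by simp_all
      ultimately show "(\<lambda>(n, d). (d, n div d)) x \<in> ?P"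
        by auto
    qed
  qed auto
  then have "(\<Sum>(n, d)\<in>?S. jordan_totient a d / real n ^ 2)
      = (\<Sum>(d, k)\<in>?P. jordan_totient a d / real (d * k) ^ 2)"
    by (subst sum.reindex_bij_betw[symmetric]) (auto simp: split_def)
  moreover have "(\<Sum>n\<in>{1..M}. real n powr a / real n ^ 2) = (\<Sum>(n, d)\<in>?S. jordan_totient a d / real n ^ 2)"
    by (simp add: sum.Sigma[symmetric] sum_divide_distrib[symmetric] sum_divisors_jordan_totient)
  ultimately show ?thesis
    by (simp add: power_mult_distrib)
qed

lemma LIMSEQ_sum_atLeast1_atMost:
  fixes f :: "nat \<Rightarrow> 'a :: {t2_space, topological_comm_monoid_add}"
  assumes "summable (\<lambda>n. f (Suc n))"
  shows "(\<lambda>K. \<Sum>k\<in>{1..K}. f k) \<longlonglongrightarrow> (\<Sum>n. f (Suc n))"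
  using summable_LIMSEQ[OF assms] by (simp add: sum.atLeast1_atMost_eq)

lemma sum_powr_div_square_bounds:
  assumes "0 \<le> a"
  shows "(\<Sum>d\<in>{1..K}. jordan_totient a d / real d ^ 2) * (\<Sum>k\<in>{1..K}. 1 / real k ^ 2)
           \<le> (\<Sum>n\<in>{1..K^2}. real n powr a / real n ^ 2)"
    and "(\<Sum>n\<in>{1..M}. real n powr a / real n ^ 2)
           \<le> (\<Sum>d\<in>{1..M}. jordan_totient a d / real d ^ 2) * (\<Sum>k\<in>{1..M}. 1 / real k ^ 2)"
proof -
  define F where "F = (\<lambda>(d, k). jordan_totient a d / real d ^ 2 / real k ^ 2)"
  have F_nonneg: "0 \<le> F x" for x
    using jordan_totient_nonneg[OF assms] by (auto simp: F_def split: prod.splits)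
  have product: "(\<Sum>d\<in>{1..M}. jordan_totient a d / real d ^ 2) * (\<Sum>k\<in>{1..M}. 1 / real k ^ 2)
      = (\<Sum>x\<in>{1..M} \<times> {1..M}. F x)" for M
    by (simp add: F_def sum_product sum.cartesian_product)
  have hyperbola: "(\<Sum>n\<in>{1..M}. real n powr a / real n ^ 2)
      = (\<Sum>x\<in>{(d, k) \<in> {1..M} \<times> {1..M}. d * k \<le> M}. F x)" for M
    unfolding F_def by (rule sum_powr_div_square_eq_hyperbola_sum)
  have finite_hyperbola: "finite {(d, k) \<in> {1..M} \<times> {1..M}. d * k \<le> M}" for M :: nat
    by (rule finite_subset[of _ "{1..M} \<times> {1..M}"]) auto
  have "{1..K} \<times> {1..K} \<subseteq> {(d, k) \<in> {1..K^2} \<times> {1..K^2}. d * k \<le> K^2}"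
    by (auto simp: power2_eq_square intro: mult_mono order.trans[of _ K])
  then show "(\<Sum>d\<in>{1..K}. jordan_totient a d / real d ^ 2) * (\<Sum>k\<in>{1..K}. 1 / real k ^ 2)
           \<le> (\<Sum>n\<in>{1..K^2}. real n powr a / real n ^ 2)"
    unfolding product hyperbola by (intro sum_mono2[OF finite_hyperbola]) (auto simp: F_nonneg)
  show "(\<Sum>n\<in>{1..M}. real n powr a / real n ^ 2)
           \<le> (\<Sum>d\<in>{1..M}. jordan_totient a d / real d ^ 2) * (\<Sum>k\<in>{1..M}. 1 / real k ^ 2)"
    unfolding product hyperbola by (intro sum_mono2) (auto simp: F_nonneg)
qed

lemma jordan_totient_dirichlet_series:
  assumes "0 \<le> a" "a < 1"
  shows "(\<Sum>n. jordan_totient a (Suc n) / real (Suc n) ^ 2) * zeta_real 2 = zeta_real (2 - a)"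
proof -
  define G where "G = (\<Sum>n. jordan_totient a (Suc n) / real (Suc n) ^ 2)"
  define H where "H = (\<lambda>K. \<Sum>d\<in>{1..K}. jordan_totient a d / real d ^ 2)"
  define Z where "Z = (\<lambda>K. \<Sum>k\<in>{1..K}. 1 / real k ^ 2)"
  define T where "T = (\<lambda>M. \<Sum>n\<in>{1..M}. real n powr a / real n ^ 2)"
  have "H \<longlonglongrightarrow> G"
    unfolding H_def G_def by (intro LIMSEQ_sum_atLeast1_atMost summable_jordan_totient_div_square assms)
  moreover have "Z \<longlonglongrightarrow> zeta_real 2"
    using LIMSEQ_sum_atLeast1_atMost[OF summable_zeta_real[of 2]]
    by (simp add: Z_def zeta_real_def del: of_nat_Suc)
  ultimately have HZ: "(\<lambda>K. H K * Z K) \<longlonglongrightarrow> G * zeta_real 2"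
    by (rule tendsto_mult)
  have "strict_mono (\<lambda>K::nat. K^2)"
    by (auto simp: strict_mono_def power_strict_mono)
  note subseq = LIMSEQ_subseq_LIMSEQ[OF _ this, unfolded comp_def]
  have "1 / real k powr (2 - a) = real k powr a / real k ^ 2" for k
    by (cases "k = 0") (simp_all add: powr_diff)
  then have "T \<longlonglongrightarrow> zeta_real (2 - a)"
    using LIMSEQ_sum_atLeast1_atMost[OF summable_zeta_real[of "2 - a"]] assms
    unfolding T_def zeta_real_def by simp
  \<comment> \<open>\<open>T\<close> is the partial sum of the Dirichlet product of \<open>H\<close> and \<open>Z\<close>, so \<open>H K * Z K \<le> T (K\<^sup>2) \<le> H (K\<^sup>2) * Z (K\<^sup>2)\<close>\<close>
  moreover have "(\<lambda>K. T (K^2)) \<longlonglongrightarrow> G * zeta_real 2"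
    using sum_powr_div_square_bounds[OF assms(1)]
    by (intro tendsto_sandwich[OF _ _ HZ subseq[OF HZ]]) (auto simp: H_def Z_def T_def)
  ultimately show ?thesis
    using subseq LIMSEQ_unique unfolding G_def by blast
qed

section \<open>The gcd sum\<close>

lemma real_nat_div_bounds:
  assumes "0 < d"
  shows "real (N div d) \<le> real N / real d" and "real N / real d < real (N div d) + 1"
proof -
  show "real (N div d) \<le> real N / real d"
    by (simp add: of_nat_div_le_of_nat)
  have "real N < real d + real d * real (N div d)"
    using dividend_less_times_div[OF assms, of N] by (metis of_nat_add of_nat_less_iff of_nat_mult)
  then show "real N / real d < real (N div d) + 1"
    using assms by (simp add: pos_divide_less_eq algebra_simps)
qed

lemma jordan_totient_series_tail:
  assumes "0 \<le> a" "a < 1" "1 \<le> N"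
  defines "G \<equiv> \<Sum>n. jordan_totient a (Suc n) / real (Suc n) ^ 2"
  shows "0 \<le> G - (\<Sum>d\<in>{1..N}. jordan_totient a d / real d ^ 2)"
    and "G - (\<Sum>d\<in>{1..N}. jordan_totient a d / real d ^ 2) \<le> real N powr (a - 1) / (1 - a)"
proof -
  let ?g = "\<lambda>n. jordan_totient a (Suc n) / real (Suc n) ^ 2"
  have summable: "summable ?g"
    using summable_jordan_totient_div_square[OF assms(1,2)] .
  have tail: "G - (\<Sum>d\<in>{1..N}. jordan_totient a d / real d ^ 2) = (\<Sum>n. ?g (n + N))"
    unfolding G_def suminf_minus_initial_segment[OF summable] by (simp add: sum.atLeast1_atMost_eq)
  have summable_tail: "summable (\<lambda>n. ?g (n + N))"
    using summable_ignore_initial_segment[OF summable] .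
  show "0 \<le> G - (\<Sum>d\<in>{1..N}. jordan_totient a d / real d ^ 2)"
    unfolding tail using jordan_totient_nonneg[OF assms(1)] by (intro suminf_nonneg[OF summable_tail]) simp
  have "(\<Sum>n<M. ?g (n + N)) \<le> real N powr (a - 1) / (1 - a)" for M
  proof -
    have "(\<Sum>n<M. ?g (n + N)) \<le> (\<Sum>n<M. real (Suc (n + N)) powr (-(1 + (1 - a))))"
      using jordan_totient_div_square_le[OF assms(1)] by (intro sum_mono) (simp del: of_nat_Suc)
    also have "\<dots> \<le> (real N powr (-(1 - a)) - real (N + M) powr (-(1 - a))) / (1 - a)"
      using assms by (intro sum_powr_tail_le) auto
    also have "\<dots> \<le> real N powr (a - 1) / (1 - a)"
      using assms by (intro divide_right_mono) auto
    finally show ?thesis .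
  qed
  then show "G - (\<Sum>d\<in>{1..N}. jordan_totient a d / real d ^ 2) \<le> real N powr (a - 1) / (1 - a)"
    unfolding tail by (intro suminf_le_const[OF summable_tail])
qed

lemma jordan_totient_mult_powr_neg_bounds:
  assumes "0 \<le> a"
  shows "0 \<le> jordan_totient a d * real d powr (-a)" and "jordan_totient a d * real d powr (-a) \<le> 1"
proof -
  show "0 \<le> jordan_totient a d * real d powr (-a)"
    using jordan_totient_nonneg[OF assms] by simp
  have "jordan_totient a d * real d powr (-a) \<le> real d powr a * real d powr (-a)"
    using jordan_totient_le_powr[OF assms] by (intro mult_right_mono) auto
  also have "\<dots> \<le> 1"
    by (cases "d = 0") (simp_all add: powr_add[symmetric])
  finally show "jordan_totient a d * real d powr (-a) \<le> 1" .
qed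

lemma gcd_sum_term_estimate:
  assumes "0 < \<alpha>" "\<alpha> < 1" "d \<in> {1..N}"
  shows "\<bar>jordan_totient (2 * \<alpha>) d * (real d powr (-\<alpha>) * (\<Sum>k\<in>{1..N div d}. real k powr (-\<alpha>)))\<^sup>2
           - real N powr (2 - 2 * \<alpha>) / (1 - \<alpha>)\<^sup>2 * (jordan_totient (2 * \<alpha>) d / real d ^ 2)\<bar>
         \<le> 2 * (real N / real d) powr (1 - \<alpha>) / (1 - \<alpha>)\<^sup>2"
proof -
  define w where "w = jordan_totient (2 * \<alpha>) d * real d powr (-(2 * \<alpha>))"
  define A where "A = (\<Sum>k\<in>{1..N div d}. real k powr (-\<alpha>))"
  define X where "X = (real N / real d) powr (1 - \<alpha>) / (1 - \<alpha>)"
  have d: "0 < real d" using assms(3) by simp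
  have "(real d powr (-\<alpha>))\<^sup>2 = real d powr (-(2 * \<alpha>))"
    by (simp add: power2_eq_square powr_add[symmetric])
  then have lhs: "jordan_totient (2 * \<alpha>) d * (real d powr (-\<alpha>) * A)\<^sup>2 = w * A\<^sup>2"
    by (simp add: w_def power_mult_distrib)
  have main_term: "real d powr (-(2 * \<alpha>)) * X\<^sup>2 = real N powr (2 - 2 * \<alpha>) / (1 - \<alpha>)\<^sup>2 / real d ^ 2"
    using d by (simp add: X_def power2_eq_square powr_divide powr_add[symmetric] powr_diff field_simps)
  have rhs: "real N powr (2 - 2 * \<alpha>) / (1 - \<alpha>)\<^sup>2 * (jordan_totient (2 * \<alpha>) d / real d ^ 2) = w * X\<^sup>2"
    unfolding w_def mult.assoc main_term by (simp add: field_simps)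
  have "\<bar>A\<^sup>2 - X\<^sup>2\<bar> \<le> 2 * (real N / real d) powr (1 - \<alpha>) / (1 - \<alpha>)\<^sup>2"
    unfolding A_def X_def using assms(1,2) real_nat_div_bounds[OF d[unfolded of_nat_0_less_iff]]
    by (intro square_sum_powr_estimate) auto
  moreover have w: "0 \<le> w" "w \<le> 1"
    unfolding w_def using jordan_totient_mult_powr_neg_bounds[of "2 * \<alpha>" d] assms(1) by auto
  ultimately have "w * \<bar>A\<^sup>2 - X\<^sup>2\<bar> \<le> 2 * (real N / real d) powr (1 - \<alpha>) / (1 - \<alpha>)\<^sup>2"
    by (meson abs_ge_zero mult_left_le_one_le order_trans)
  moreover have "\<bar>w * A\<^sup>2 - w * X\<^sup>2\<bar> = w * \<bar>A\<^sup>2 - X\<^sup>2\<bar>"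
    using w by (simp add: abs_mult right_diff_distrib[symmetric])
  ultimately have "\<bar>w * A\<^sup>2 - w * X\<^sup>2\<bar> \<le> 2 * (real N / real d) powr (1 - \<alpha>) / (1 - \<alpha>)\<^sup>2"
    by simp
  then show ?thesis
    unfolding A_def[symmetric] lhs rhs .
qed

lemma sum_gcd_powr_estimate:
  fixes \<alpha> :: real
  assumes "0 < \<alpha>" "\<alpha> < 1"
  shows "\<bar>(\<Sum>m\<in>{1..N}. \<Sum>n\<in>{1..N}. real (gcd m n) powr (2 * \<alpha>) / real (m * n) powr \<alpha>)
          - real N powr (2 - 2 * \<alpha>) / (1 - \<alpha>)\<^sup>2 * (\<Sum>d\<in>{1..N}. jordan_totient (2 * \<alpha>) d / real d ^ 2)\<bar>
         \<le> 2 * real N / (\<alpha> * (1 - \<alpha>)\<^sup>2)"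
proof -
  have "\<bar>(\<Sum>m\<in>{1..N}. \<Sum>n\<in>{1..N}. real (gcd m n) powr (2 * \<alpha>) / real (m * n) powr \<alpha>)
          - real N powr (2 - 2 * \<alpha>) / (1 - \<alpha>)\<^sup>2 * (\<Sum>d\<in>{1..N}. jordan_totient (2 * \<alpha>) d / real d ^ 2)\<bar>
      \<le> (\<Sum>d\<in>{1..N}. 2 * (real N / real d) powr (1 - \<alpha>) / (1 - \<alpha>)\<^sup>2)"
    unfolding sum_gcd_powr_div_powr sum_distrib_left sum_subtractf[symmetric]
    using gcd_sum_term_estimate[OF assms]
    by (intro order_trans[OF sum_abs sum_mono]) (simp add: sum_distrib_left)
  also have "\<dots> = 2 * real N powr (1 - \<alpha>) / (1 - \<alpha>)\<^sup>2 * (\<Sum>d\<in>{1..N}. real d powr (-(1 - \<alpha>)))"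
    unfolding sum_distrib_left powr_minus_divide
    by (intro sum.cong refl) (simp add: powr_divide)
  also have "\<dots> \<le> 2 * real N powr (1 - \<alpha>) / (1 - \<alpha>)\<^sup>2 * (real N powr \<alpha> / \<alpha>)"
    using sum_powr_le[of "1 - \<alpha>" N] assms by (intro mult_left_mono) auto
  also have "\<dots> = 2 * real N / (\<alpha> * (1 - \<alpha>)\<^sup>2)"
  proof -
    have "real N powr (1 - \<alpha>) * real N powr \<alpha> = real N"
      by (cases "N = 0") (simp_all add: powr_add[symmetric])
    then show ?thesis
      by (simp add: field_simps)
  qed
  finally show ?thesis .
qed

lemma sum_gcd_powr_asymptotic:
  fixes \<alpha> :: real
  assumes "0 < \<alpha>" "\<alpha> < 1/2" "1 \<le> N"
  shows "\<bar>(\<Sum>m\<in>{1..N}. \<Sum>n\<in>{1..N}. real (gcd m n) powr (2 * \<alpha>) / real (m * n) powr \<alpha>)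
          - zeta_real (2 - 2 * \<alpha>) / (zeta_real 2 * (1 - \<alpha>)\<^sup>2) * real N powr (2 - 2 * \<alpha>)\<bar>
         \<le> (2 / \<alpha> + 1 / (1 - 2 * \<alpha>)) / (1 - \<alpha>)\<^sup>2 * real N"
proof -
  define S where "S = (\<Sum>m\<in>{1..N}. \<Sum>n\<in>{1..N}. real (gcd m n) powr (2 * \<alpha>) / real (m * n) powr \<alpha>)"
  define c where "c = real N powr (2 - 2 * \<alpha>) / (1 - \<alpha>)\<^sup>2"
  define H where "H = (\<Sum>d\<in>{1..N}. jordan_totient (2 * \<alpha>) d / real d ^ 2)"
  define G where "G = (\<Sum>n. jordan_totient (2 * \<alpha>) (Suc n) / real (Suc n) ^ 2)"
  have "G * zeta_real 2 = zeta_real (2 - 2 * \<alpha>)"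
    unfolding G_def using assms by (intro jordan_totient_dirichlet_series) auto
  then have "G = zeta_real (2 - 2 * \<alpha>) / zeta_real 2"
    using zeta_real_pos[of 2] by (simp add: eq_divide_eq)
  then have zeta_quotient: "zeta_real (2 - 2 * \<alpha>) / (zeta_real 2 * (1 - \<alpha>)\<^sup>2) * real N powr (2 - 2 * \<alpha>) = c * G"
    by (simp add: c_def mult_ac)
  have estimate: "\<bar>S - c * H\<bar> \<le> 2 * real N / (\<alpha> * (1 - \<alpha>)\<^sup>2)"
    unfolding S_def c_def H_def using assms by (intro sum_gcd_powr_estimate) auto
  have tail: "0 \<le> G - H" "G - H \<le> real N powr (2 * \<alpha> - 1) / (1 - 2 * \<alpha>)"
    unfolding G_def H_def using assms by (intro jordan_totient_series_tail; simp)+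
  have "0 \<le> c"
    by (simp add: c_def)
  have "\<bar>S - c * G\<bar> = \<bar>(S - c * H) - c * (G - H)\<bar>"
    by (simp add: algebra_simps)
  also have "\<dots> \<le> \<bar>S - c * H\<bar> + c * (G - H)"
    using \<open>0 \<le> c\<close> tail(1) by (metis abs_of_nonneg abs_triangle_ineq4 mult_nonneg_nonneg)
  also have "\<dots> \<le> 2 * real N / (\<alpha> * (1 - \<alpha>)\<^sup>2) + c * (real N powr (2 * \<alpha> - 1) / (1 - 2 * \<alpha>))"
    using estimate tail(2) \<open>0 \<le> c\<close> by (intro add_mono mult_left_mono)
  also have "\<dots> = 2 * real N / (\<alpha> * (1 - \<alpha>)\<^sup>2) + real N / ((1 - 2 * \<alpha>) * (1 - \<alpha>)\<^sup>2)"
    using assms by (simp add: c_def powr_add[symmetric])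
  also have "\<dots> = (2 / \<alpha> + 1 / (1 - 2 * \<alpha>)) / (1 - \<alpha>)\<^sup>2 * real N"
    by (simp add: add_divide_distrib distrib_right)
  finally show ?thesis
    unfolding S_def[symmetric] zeta_quotient .
qed

theorem mainTheorem3:
  fixes \<alpha> :: real
  assumes "0 < \<alpha>" and "\<alpha> < 1/2"
  shows "\<exists>C. \<forall>N::nat. N \<ge> 1 \<longrightarrow>
    \<bar>(1 / real N) * (\<Sum>m\<in>{1..N}. \<Sum>n\<in>{1..N}.
        real (gcd m n) powr (2*\<alpha>) / (real (m*n)) powr \<alpha>)
     - zeta_real (2 - 2*\<alpha>) / (zeta_real 2 * (1 - \<alpha>)^2) * real N powr (1 - 2*\<alpha>)\<bar> \<le> C"
proof (intro exI allI impI)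
  fix N :: nat
  assume "N \<ge> 1"
  define S where "S = (\<Sum>m\<in>{1..N}. \<Sum>n\<in>{1..N}. real (gcd m n) powr (2*\<alpha>) / (real (m*n)) powr \<alpha>)"
  define z where "z = zeta_real (2 - 2*\<alpha>) / (zeta_real 2 * (1 - \<alpha>)^2)"
  have N: "0 < real N" using \<open>N \<ge> 1\<close> by simp
  have "real N powr (2 - 2 * \<alpha>) = real N * real N powr (1 - 2 * \<alpha>)"
    using N powr_add[of "real N" 1 "1 - 2 * \<alpha>"] by simp
  then have "(1 / real N) * S - z * real N powr (1 - 2*\<alpha>) = (S - z * real N powr (2 - 2 * \<alpha>)) / real N"
    using N by (simp add: field_simps)
  then have "\<bar>(1 / real N) * S - z * real N powr (1 - 2*\<alpha>)\<bar> = \<bar>S - z * real N powr (2 - 2 * \<alpha>)\<bar> / real N"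
    by simp
  also have "\<dots> \<le> (2 / \<alpha> + 1 / (1 - 2 * \<alpha>)) / (1 - \<alpha>)\<^sup>2"
    using sum_gcd_powr_asymptotic[OF assms \<open>N \<ge> 1\<close>] N unfolding S_def z_def
    by (simp add: pos_divide_le_eq)
  finally show "\<bar>(1 / real N) * (\<Sum>m\<in>{1..N}. \<Sum>n\<in>{1..N}.
        real (gcd m n) powr (2*\<alpha>) / (real (m*n)) powr \<alpha>)
     - zeta_real (2 - 2*\<alpha>) / (zeta_real 2 * (1 - \<alpha>)^2) * real N powr (1 - 2*\<alpha>)\<bar>
     \<le> (2 / \<alpha> + 1 / (1 - 2 * \<alpha>)) / (1 - \<alpha>)\<^sup>2"
    unfolding S_def z_def .
qed

end
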